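(* Let $N$ be a perfect planar network in an annulus whose edge weights are given by flag coordinates as $w_e=x_v^ix_u^j$, and let $\{\cdot,\cdot\}_N$ be the Poisson bracket on the space of edge weights obtained as the pushforward of the universal bracket with parameters $\alpha_{ij},\beta_{ij}$. Then the gauge-invariant functions on the space of edge weights form a Poisson subalgebra, so that $\{\cdot,\cdot\}_N$ pushes forward under the projection $y:\mathcal E_N\to\mathcal F_N$ to a Poisson bracket $\{\cdot,\cdot\}_{\mathcal F_N}$ on the space $\mathcal F_N$ of face and trail weights; moreover, $\{\cdot,\cdot\}_{\mathcal F_N}$ depends on the six parameters $\alpha_{ij}$ and the six parameters $\beta_{ij}$ only through \[ \alpha=\alpha_{23}+\alpha_{13}-\alpha_{12},\qquad \beta=\beta_{23}+\beta_{13}-\beta_{12}, \] and is linear in $(\alpha,\beta)$.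
   Context: A perfect planar network in an annulus: a directed graph $G=(V,E)$ embedded in an annulus, with boundary vertices on the two boundary circles, each a source (one outgoing edge, no incoming) or a sink (one incoming edge, no outgoing); internal vertices have degree $3$ and are white (exactly one incoming edge) or black (exactly one outgoing edge); a cut and edge weights $w_e\in\mathbb R\setminus0$ as usual. A flag is a pair $(v,e)$ with $v$ an endpoint of $e$. To each internal vertex $v$ assign coordinates $x_v^1,x_v^2,x_v^3\in\mathbb R\setminus0$ labeling the three flags at $v$: $x_v^1$ labels the flag of the edge that is unique in its direction at $v$ (the incoming edge if $v$ is white, the outgoing edge if $v$ is black), and the flags labeled $x_v^1,x_v^2,x_v^3$ follow each other in clockwise order around $v$. Each boundary vertex $b_j$ gets one coordinate $x_j^1$ labeling its unique flag. Edge weights are $w_e=x_v^ix_u^j$, where $x_v^i,x_u^j$ label the two flags of $e$. The universal bracket is $\{x_v^i,x_v^j\}=\alpha_{ij}x_v^ix_v^j$ at white $v$, $\{x_v^i,x_v^j\}=\beta_{ij}x_v^ix_v^j$ at black $v$ ($i\ne j$, antisymmetric constants), all other brackets of coordinates zero; $\{\cdot,\cdot\}_N$ is its pushforward to the space $\mathcal E_N=(\mathbb R\setminus0)^{|E|}$ of edge weights. Gauge group: $\mathcal G=\mathrm{Hom}(\mathbb Z^{V_0},\mathbb R^* )$, $V_0$ the internal vertices, i.e. functions $\varphi:V\to\mathbb R^*$ with $\varphi(b)=1$ at boundary vertices, acting by $w_e\mapsto w_e\varphi(v)/\varphi(u)$ for $e=(u,v)$. $\mathcal F_N=\mathcal E_N/\mathcal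 G$ and $y:\mathcal E_N\to\mathcal F_N$ is the projection. The functions on $\mathcal F_N$ are generated by face weights $y_f=\prod_{e\in\partial f}w_e^{\pm1}$ (exponent $+1$ if the direction of $e$ agrees with the counterclockwise orientation of $\partial f$, $-1$ otherwise; $f$ a connected component of the complement of $G$ in the annulus) and, if some trail connects the two boundary circles, by the weight $y_t=\prod w(v_i,v_{i+1})$ of such a trail $t=(v_1,\dots,v_{k+1})$ (a sequence of vertices, consecutive ones joined by an edge in either direction, with boundary endpoints), where $w(v_i,v_{i+1})=w_e$ if $e=(v_i,v_{i+1})\in E$ and $w_e^{-1}$ if $e=(v_{i+1},v_i)\in E$. *)

theory Defs
  imports "HOL-Analysis.Analysis"
begin

text \<open>
A flag is a pair (e, s) with s = False
for the tail end of e and s = True for the head end (so a loop has two flags).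
bd is the set of boundary vertices, wh v says that the internal vertex v is
white (otherwise black).  rot is the clockwise rotation of flags around
internal vertices and lab gives the index i of the coordinate x_v^i of a flag.
\<close>

type_synonym 'e flag = "'e \<times> bool"

definition fvert :: "('e \<Rightarrow> 'v) \<Rightarrow> ('e \<Rightarrow> 'v) \<Rightarrow> 'e flag \<Rightarrow> 'v" where
  "fvert src tgt a = (if snd a then tgt (fst a) else src (fst a))"

definition flags_at :: "('e \<Rightarrow> 'v) \<Rightarrow> ('e \<Rightarrow> 'v) \<Rightarrow> 'v \<Rightarrow> 'e flag set" where
  "flags_at src tgt v = {a. fvert src tgt a = v}"

definition in_flags :: "('e \<Rightarrow> 'v) \<Rightarrow> ('e \<Rightarrow> 'v) \<Rightarrow> 'v \<Rightarrow> 'e flag set" where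
  "in_flags src tgt v = {a. snd a \<and> tgt (fst a) = v}"

definition out_flags :: "('e \<Rightarrow> 'v) \<Rightarrow> ('e \<Rightarrow> 'v) \<Rightarrow> 'v \<Rightarrow> 'e flag set" where
  "out_flags src tgt v = {a. \<not> snd a \<and> src (fst a) = v}"

definition perfect_network ::
  "('e::finite \<Rightarrow> 'v) \<Rightarrow> ('e \<Rightarrow> 'v) \<Rightarrow> 'v set \<Rightarrow> ('v \<Rightarrow> bool)
   \<Rightarrow> ('e flag \<Rightarrow> 'e flag) \<Rightarrow> ('e flag \<Rightarrow> nat) \<Rightarrow> bool" where
  "perfect_network src tgt bd wh rot lab \<longleftrightarrow>
     \<comment> \<open>boundary vertices: exactly one flag (source or sink)\<close>
     (\<forall>v\<in>bd. card (flags_at src tgt v) = 1) \<and>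
     \<comment> \<open>internal vertices: degree 3, white: one incoming, black: one outgoing\<close>
     (\<forall>v. v \<notin> bd \<longrightarrow> (flags_at src tgt v \<noteq> {} \<longrightarrow>
        card (flags_at src tgt v) = 3 \<and>
        (if wh v then card (in_flags src tgt v) = 1 else card (out_flags src tgt v) = 1))) \<and>
     \<comment> \<open>rotation system: rot cyclically permutes the three flags at each internal vertex\<close>
     (\<forall>a. fvert src tgt a \<notin> bd \<longrightarrow>
        fvert src tgt (rot a) = fvert src tgt a \<and> rot a \<noteq> a \<and> rot (rot (rot a)) = a) \<and>
     \<comment> \<open>labels: 1 on the flag unique in its direction, then 2, 3 clockwise\<close>
     (\<forall>a. fvert src tgt a \<notin> bd \<longrightarrow>
        lab a \<in> {1,2,3} \<and> lab (rot a) = lab a mod 3 + 1 \<and>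
        (lab a = 1 \<longleftrightarrow> (if wh (fvert src tgt a) then snd a else \<not> snd a))) \<and>
     (\<forall>a. fvert src tgt a \<in> bd \<longrightarrow> lab a = 1)"

definition edge_weights :: "real ^ ('e::finite flag) \<Rightarrow> real ^ 'e" where
  "edge_weights x = (\<chi> e. x $ (e, False) * x $ (e, True))"

definition EN :: "(real ^ ('e::finite)) set" where
  "EN = {w. \<forall>e. w $ e \<noteq> 0}"

definition XN :: "(real ^ ('e::finite flag)) set" where
  "XN = {x. \<forall>a. x $ a \<noteq> 0}"

definition pd :: "(real ^ 'i::finite \<Rightarrow> real) \<Rightarrow> 'i \<Rightarrow> real ^ 'i \<Rightarrow> real" where
  "pd f i w = deriv (\<lambda>t. f (\<chi> j. if j = i then t else w $ j)) (w $ i)"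

text \<open>structure constants of the universal bracket:
  {x_a, x_b} = univ_pi a b * x_a * x_b\<close>
definition univ_pi ::
  "('e \<Rightarrow> 'v) \<Rightarrow> ('e \<Rightarrow> 'v) \<Rightarrow> 'v set \<Rightarrow> ('v \<Rightarrow> bool) \<Rightarrow> ('e flag \<Rightarrow> nat)
   \<Rightarrow> (nat \<Rightarrow> nat \<Rightarrow> real) \<Rightarrow> (nat \<Rightarrow> nat \<Rightarrow> real) \<Rightarrow> 'e flag \<Rightarrow> 'e flag \<Rightarrow> real" where
  "univ_pi src tgt bd wh lab \<alpha> \<beta> a b =
     (if a \<noteq> b \<and> fvert src tgt a = fvert src tgt b \<and> fvert src tgt a \<notin> bd
      then (if wh (fvert src tgt a) then \<alpha> (lab a) (lab b) else \<beta> (lab a) (lab b))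
      else 0)"

definition univ_bracket ::
  "('e::finite \<Rightarrow> 'v) \<Rightarrow> ('e \<Rightarrow> 'v) \<Rightarrow> 'v set \<Rightarrow> ('v \<Rightarrow> bool) \<Rightarrow> ('e flag \<Rightarrow> nat)
   \<Rightarrow> (nat \<Rightarrow> nat \<Rightarrow> real) \<Rightarrow> (nat \<Rightarrow> nat \<Rightarrow> real)
   \<Rightarrow> (real ^ 'e flag \<Rightarrow> real) \<Rightarrow> (real ^ 'e flag \<Rightarrow> real) \<Rightarrow> real ^ 'e flag \<Rightarrow> real" where
  "univ_bracket src tgt bd wh lab \<alpha> \<beta> F G x =
     (\<Sum>a\<in>UNIV. \<Sum>b\<in>UNIV. univ_pi src tgt bd wh lab \<alpha> \<beta> a b * x $ a * x $ b * pd F a x * pd G b x)"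

definition net_omega ::
  "('e \<Rightarrow> 'v) \<Rightarrow> ('e \<Rightarrow> 'v) \<Rightarrow> 'v set \<Rightarrow> ('v \<Rightarrow> bool) \<Rightarrow> ('e flag \<Rightarrow> nat)
   \<Rightarrow> (nat \<Rightarrow> nat \<Rightarrow> real) \<Rightarrow> (nat \<Rightarrow> nat \<Rightarrow> real) \<Rightarrow> 'e \<Rightarrow> 'e \<Rightarrow> real" where
  "net_omega src tgt bd wh lab \<alpha> \<beta> e f =
     (\<Sum>s\<in>UNIV. \<Sum>t\<in>UNIV. univ_pi src tgt bd wh lab \<alpha> \<beta> (e, s) (f, t))"

definition net_bracket ::
  "('e::finite \<Rightarrow> 'v) \<Rightarrow> ('e \<Rightarrow> 'v) \<Rightarrow> 'v set \<Rightarrow> ('v \<Rightarrow> bool) \<Rightarrow> ('e flag \<Rightarrow> nat)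
   \<Rightarrow> (nat \<Rightarrow> nat \<Rightarrow> real) \<Rightarrow> (nat \<Rightarrow> nat \<Rightarrow> real)
   \<Rightarrow> (real ^ 'e \<Rightarrow> real) \<Rightarrow> (real ^ 'e \<Rightarrow> real) \<Rightarrow> real ^ 'e \<Rightarrow> real" where
  "net_bracket src tgt bd wh lab \<alpha> \<beta> f g w =
     (\<Sum>e\<in>UNIV. \<Sum>e'\<in>UNIV. net_omega src tgt bd wh lab \<alpha> \<beta> e e' * w $ e * w $ e' * pd f e w * pd g e' w)"

definition gauge_group :: "'v set \<Rightarrow> ('v \<Rightarrow> real) set" where
  "gauge_group bd = {\<phi>. (\<forall>v. \<phi> v \<noteq> 0) \<and> (\<forall>v\<in>bd. \<phi> v = 1)}"

definition gauge_act :: "('e::finite \<Rightarrow> 'v) \<Rightarrow> ('e \<Rightarrow> 'v) \<Rightarrow> ('v \<Rightarrow> real) \<Rightarrow> real ^ 'e \<Rightarrow> real ^ 'e" where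
  "gauge_act src tgt \<phi> w = (\<chi> e. w $ e * \<phi> (tgt e) / \<phi> (src e))"

definition gauge_invariant ::
  "('e::finite \<Rightarrow> 'v) \<Rightarrow> ('e \<Rightarrow> 'v) \<Rightarrow> 'v set \<Rightarrow> (real ^ 'e \<Rightarrow> real) \<Rightarrow> bool" where
  "gauge_invariant src tgt bd f \<longleftrightarrow>
     (\<forall>\<phi>\<in>gauge_group bd. \<forall>w\<in>EN. f (gauge_act src tgt \<phi> w) = f w)"

definition antisym3 :: "(nat \<Rightarrow> nat \<Rightarrow> real) \<Rightarrow> bool" where
  "antisym3 c \<longleftrightarrow> (\<forall>i\<in>{1,2,3}. \<forall>j\<in>{1,2,3}. c i j = - c j i)"

definition smooth_on_EN :: "(real ^ ('e::finite) \<Rightarrow> real) \<Rightarrow> bool" where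
  "smooth_on_EN f \<longleftrightarrow> (\<forall>w\<in>EN. f differentiable (at w))"

end

theory Submission imports Defs begin

(* Write F_a = w_e * df/dw_e for the logarithmic partial derivative of a
   function on edge weights, attached to both flags a of the edge e.  Then
   (0) by the chain rule x_a * d(f o w)/dx_a = F_a, so the universal bracket of pullbacks is
       sum_{a,b} pi(a,b) F_a G_b, which regroups edge by edge into the network bracket;
   (1) gauge invariance of f makes F_a gauge invariant (the gauge action rescales w_e and
       w_e * d/dw_e is scale invariant), hence so is the bracket;
   (2) differentiating gauge invariance at the identity gives, at every internal vertex v,
       sum of F over incoming flags = sum of F over outgoing flags; with labels 1,2,3 at v
       this reads F_1 = F_2 + F_3.  Substituting this into the six terms of the bracket at
       v and using antisymmetry leaves (c_23 + c_13 - c_12)(F_2 G_3 - F_3 G_2). *)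

section \<open>Partial derivatives\<close>

lemma coordinate_line_derivative:
  fixes f :: "real^'i::finite \<Rightarrow> real"
  assumes "(f has_derivative f') (at w)"
  shows "((\<lambda>t. f (\<chi> j. if j = i then t else w$j)) has_field_derivative f' (axis i 1)) (at (w$i))"
proof -
  have line: "(\<chi> j. if j = i then t else w$j) = w + (t - w$i) *\<^sub>R axis i 1" for t
    by (auto simp: vec_eq_iff axis_def)
  have "((\<lambda>t. w + (t - w$i) *\<^sub>R axis i 1) has_derivative (\<lambda>h. h *\<^sub>R axis i 1)) (at (w$i))"
    by (auto intro!: derivative_eq_intros)
  then have "((\<lambda>t. f (w + (t - w$i) *\<^sub>R axis i 1)) has_derivative (\<lambda>h. f' (h *\<^sub>R axis i 1))) (at (w$i))"
    using has_derivative_compose[of _ _ "w$i" UNIV f f'] assms by simp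
  moreover have "(\<lambda>h. f' (h *\<^sub>R axis i 1)) = (*) (f' (axis i 1))"
    using has_derivative_bounded_linear[OF assms]
    by (auto simp: fun_eq_iff linear_cmul bounded_linear.linear)
  ultimately show ?thesis unfolding has_field_derivative_def line by simp
qed

lemma pd_eq_derivative:
  fixes f :: "real^'i::finite \<Rightarrow> real"
  assumes "(f has_derivative f') (at w)"
  shows "pd f i w = f' (axis i 1)"
  unfolding pd_def by (rule DERIV_imp_deriv[OF coordinate_line_derivative[OF assms]])

text \<open>Version with a rescaled parameter t \<mapsto> c t, needed when one coordinate of the
  argument is a constant multiple of the variable (chain rule through w_e = x_a x_a').\<close>
lemma scaled_coordinate_line_derivative:
  fixes f :: "real^'i::finite \<Rightarrow> real"
  assumes "(f has_derivative f') (at w)" "c * s = w$i"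
  shows "((\<lambda>t. f (\<chi> j. if j = i then c * t else w$j)) has_field_derivative f' (axis i 1) * c) (at s)"
proof -
  have "((\<lambda>t. c * t) has_field_derivative c) (at s)"
    by (auto intro!: derivative_eq_intros)
  from DERIV_chain2[OF coordinate_line_derivative[OF assms(1), of i, folded assms(2)] this]
  show ?thesis by simp
qed

lemma derivative_by_partials:
  fixes f :: "real^'i::finite \<Rightarrow> real"
  assumes "(f has_derivative f') (at w)"
  shows "f' d = (\<Sum>e\<in>UNIV. d$e * pd f e w)"
proof -
  have "f' d = f' (\<Sum>e\<in>UNIV. (d$e) *\<^sub>R axis e 1)"
    using basis_expansion[of d] by (simp add: scalar_mult_eq_scaleR)
  also have "\<dots> = (\<Sum>e\<in>UNIV. d$e * f' (axis e 1))"
    using has_derivative_bounded_linear[OF assms]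
    by (simp add: linear_sum bounded_linear.linear linear_cmul)
  finally show ?thesis by (simp add: pd_eq_derivative[OF assms])
qed

section \<open>The bracket in terms of logarithmic partial derivatives at flags\<close>

definition flag_logderiv :: "(real ^ 'e \<Rightarrow> real) \<Rightarrow> real ^ 'e \<Rightarrow> 'e flag \<Rightarrow> real" where
  "flag_logderiv f w a = w$(fst a) * pd f (fst a) w"

lemma sum_pairs: "sum h (UNIV :: ('a::finite \<times> 'b::finite) set) = (\<Sum>e\<in>UNIV. \<Sum>s\<in>UNIV. h (e,s))"
  by (simp only: sum.cartesian_product UNIV_Times_UNIV case_prod_eta)

lemma sum_flags:
  fixes p :: "'e::finite flag \<Rightarrow> 'e flag \<Rightarrow> real"
  shows "(\<Sum>a\<in>UNIV. \<Sum>b\<in>UNIV. p a b * X (fst a) * Y (fst b))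
    = (\<Sum>e\<in>UNIV. \<Sum>e'\<in>UNIV. (\<Sum>s\<in>UNIV. \<Sum>t\<in>UNIV. p (e,s) (e',t)) * X e * Y e')"
proof -
  have "(\<Sum>a\<in>UNIV. \<Sum>b\<in>UNIV. p a b * X (fst a) * Y (fst b))
      = (\<Sum>e\<in>UNIV. \<Sum>s\<in>UNIV. \<Sum>e'\<in>UNIV. \<Sum>t\<in>UNIV. p (e,s) (e',t) * X e * Y e')"
    by (simp add: sum_pairs)
  also have "\<dots> = (\<Sum>e\<in>UNIV. \<Sum>e'\<in>UNIV. \<Sum>s\<in>UNIV. \<Sum>t\<in>UNIV. p (e,s) (e',t) * X e * Y e')"
    by (rule sum.cong[OF refl], rule sum.swap)
  finally show ?thesis by (simp add: sum_distrib_right)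
qed

text \<open>The network bracket is the universal pairing of flags applied to the logarithmic
  partial derivatives: edge coefficients are sums of flag coefficients.\<close>
lemma net_bracket_flags:
  "net_bracket src tgt bd wh lab \<alpha> \<beta> f g w
    = (\<Sum>a\<in>UNIV. \<Sum>b\<in>UNIV. univ_pi src tgt bd wh lab \<alpha> \<beta> a b
         * flag_logderiv f w a * flag_logderiv g w b)"
proof -
  have "net_bracket src tgt bd wh lab \<alpha> \<beta> f g w = (\<Sum>e\<in>UNIV. \<Sum>e'\<in>UNIV.
     (\<Sum>s\<in>UNIV. \<Sum>t\<in>UNIV. univ_pi src tgt bd wh lab \<alpha> \<beta> (e,s) (e',t))
       * (w$e * pd f e w) * (w$e' * pd g e' w))"
    unfolding net_bracket_def net_omega_def by (simp add: mult_ac)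
  also have "\<dots> = (\<Sum>a\<in>UNIV. \<Sum>b\<in>UNIV. univ_pi src tgt bd wh lab \<alpha> \<beta> a b
         * flag_logderiv f w a * flag_logderiv g w b)"
    unfolding flag_logderiv_def by (rule sum_flags[symmetric])
  finally show ?thesis .
qed

lemma edge_weights_in_EN: "x \<in> XN \<Longrightarrow> edge_weights x \<in> EN"
  by (auto simp: XN_def EN_def edge_weights_def)

text \<open>Chain rule for w = edge_weights x: since w_e = x_a x_a' for the two flags a, a' of e,
  the logarithmic derivative in x_a equals the logarithmic derivative in w_e.\<close>
lemma logderiv_pullback:
  assumes x: "x \<in> XN" and df: "f differentiable at (edge_weights x)"
  shows "x$a * pd (f \<circ> edge_weights) a x = flag_logderiv f (edge_weights x) a"
proof -
  obtain f' where f': "(f has_derivative f') (at (edge_weights x))"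
    using df by (auto simp: differentiable_def)
  define w where "w = edge_weights x"
  define c where "c = x$(fst a, \<not> snd a)"
  have cw: "c * x$a = w$(fst a)"
    by (cases a; cases "snd a") (auto simp: c_def w_def edge_weights_def)
  have line: "(f \<circ> edge_weights) (\<chi> j. if j = a then t else x$j)
      = f (\<chi> j. if j = fst a then c * t else w$j)" for t
    by (cases a; cases "snd a")
      (auto simp: c_def w_def edge_weights_def vec_eq_iff intro!: arg_cong[where f=f])
  have "pd (f \<circ> edge_weights) a x = f' (axis (fst a) 1) * c"
    unfolding pd_def line
    by (rule DERIV_imp_deriv, rule scaled_coordinate_line_derivative) (use f' cw in \<open>auto simp: w_def\<close>)
  then show ?thesis
    using cw pd_eq_derivative[OF f'] by (simp add: flag_logderiv_def w_def mult_ac)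
qed

lemma univ_bracket_pushforward:
  assumes sf: "smooth_on_EN f" and sg: "smooth_on_EN g" and x: "x \<in> XN"
  shows "univ_bracket src tgt bd wh lab \<alpha> \<beta> (f \<circ> edge_weights) (g \<circ> edge_weights) x
       = net_bracket src tgt bd wh lab \<alpha> \<beta> f g (edge_weights x)"
proof -
  have df: "f differentiable at (edge_weights x)" and dg: "g differentiable at (edge_weights x)"
    using sf sg edge_weights_in_EN[OF x] by (auto simp: smooth_on_EN_def)
  have "univ_bracket src tgt bd wh lab \<alpha> \<beta> (f \<circ> edge_weights) (g \<circ> edge_weights) x
     = (\<Sum>a\<in>UNIV. \<Sum>b\<in>UNIV. univ_pi src tgt bd wh lab \<alpha> \<beta> a b
          * (x$a * pd (f \<circ> edge_weights) a x) * (x$b * pd (g \<circ> edge_weights) b x))"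
    unfolding univ_bracket_def by (simp add: mult_ac)
  then show ?thesis
    by (simp only: logderiv_pullback[OF x df] logderiv_pullback[OF x dg] net_bracket_flags)
qed

section \<open>Consequences of gauge invariance\<close>

lemma gauge_act_in_EN: "\<phi> \<in> gauge_group bd \<Longrightarrow> w \<in> EN \<Longrightarrow> gauge_act src tgt \<phi> w \<in> EN"
  by (auto simp: gauge_group_def EN_def gauge_act_def)

text \<open>The logarithmic partial derivatives of a gauge-invariant function are gauge invariant:
  the gauge action rescales each w_e by a constant, and w_e * d/dw_e is scale invariant.\<close>
lemma logderiv_gauge_invariant:
  assumes gi: "gauge_invariant src tgt bd f" and sm: "smooth_on_EN f"
    and phi: "\<phi> \<in> gauge_group bd" and w: "w \<in> EN"
  shows "flag_logderiv f (gauge_act src tgt \<phi> w) a = flag_logderiv f w a"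
proof -
  define e where "e = fst a"
  define u where "u = gauge_act src tgt \<phi> w"
  define r where "r = \<phi> (tgt e) / \<phi> (src e)"
  have u: "u \<in> EN" using gauge_act_in_EN[OF phi w] by (simp add: u_def)
  obtain f' where f': "(f has_derivative f') (at u)"
    using sm u by (auto simp: smooth_on_EN_def differentiable_def)
  have ue: "u$e = w$e * r" by (simp add: u_def r_def gauge_act_def)
  have scaled: "((\<lambda>t. f (\<chi> j. if j = e then r * t else u$j)) has_field_derivative f' (axis e 1) * r) (at (w$e))"
    by (rule scaled_coordinate_line_derivative[OF f']) (simp add: ue)
  have same_line: "f (\<chi> j. if j = e then r * t else u$j) = f (\<chi> j. if j = e then t else w$j)"
    if "t \<in> {t. t \<noteq> 0}" for t
  proof -
    have "(\<chi> j. if j = e then t else w$j) \<in> EN" using that w by (auto simp: EN_def)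
    moreover have "gauge_act src tgt \<phi> (\<chi> j. if j = e then t else w$j) = (\<chi> j. if j = e then r * t else u$j)"
      by (auto simp: gauge_act_def vec_eq_iff u_def r_def)
    ultimately show ?thesis using gi phi unfolding gauge_invariant_def by metis
  qed
  have "((\<lambda>t. f (\<chi> j. if j = e then t else w$j)) has_field_derivative f' (axis e 1) * r) (at (w$e))"
    by (rule has_field_derivative_transform_within_open[OF scaled _ _ same_line, of "{t. t \<noteq> 0}"])
      (use w in \<open>auto simp: EN_def open_Collect_neq\<close>)
  then have "pd f e w = f' (axis e 1) * r" unfolding pd_def by (rule DERIV_imp_deriv)
  then show ?thesis
    using pd_eq_derivative[OF f', of e] ue by (simp add: flag_logderiv_def e_def u_def)
qed

lemma gauge_invariant_net_bracket:
  assumes sf: "smooth_on_EN f" and sg: "smooth_on_EN g"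
    and gf: "gauge_invariant src tgt bd f" and gg: "gauge_invariant src tgt bd g"
  shows "gauge_invariant src tgt bd (net_bracket src tgt bd wh lab \<alpha> \<beta> f g)"
  unfolding gauge_invariant_def net_bracket_flags
  using logderiv_gauge_invariant[OF gf sf] logderiv_gauge_invariant[OF gg sg] by simp

text \<open>Infinitesimal gauge invariance at an internal vertex v: differentiating
  f(gauge_act phi_t w) = f w for the one-parameter gauge phi_t(v) = exp t.\<close>
lemma gauge_conservation_edges:
  assumes gi: "gauge_invariant src tgt bd f" and sm: "smooth_on_EN f"
    and w: "w \<in> EN" and v: "v \<notin> bd"
  shows "(\<Sum>e\<in>UNIV. w$e * pd f e w * ((if tgt e = v then 1 else 0) - (if src e = v then 1 else 0))) = 0"
proof -
  define cf where "cf e = (if tgt e = v then 1 else 0) - (if src e = v then (1::real) else 0)" for e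
  define \<gamma> where "\<gamma> t = (\<Sum>e\<in>UNIV. (w$e * exp (t * cf e)) *\<^sub>R axis e (1::real))" for t
  define d where "d = (\<Sum>e\<in>UNIV. (w$e * cf e) *\<^sub>R axis e (1::real))"
  have \<gamma>_vec: "\<gamma> t = (\<chi> e. w$e * exp (t * cf e))" for t
    unfolding \<gamma>_def using basis_expansion[of "\<chi> e. w$e * exp (t * cf e)"]
    by (simp add: scalar_mult_eq_scaleR)
  have d_vec: "d = (\<chi> e. w$e * cf e)"
    unfolding d_def using basis_expansion[of "\<chi> e. w$e * cf e"] by (simp add: scalar_mult_eq_scaleR)
  have "(\<gamma> has_derivative (\<lambda>h. h *\<^sub>R d)) (at 0)"
    unfolding \<gamma>_def d_def
    by (auto intro!: derivative_eq_intros simp: scaleR_sum_right mult_ac)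
  moreover obtain f' where f': "(f has_derivative f') (at w)"
    using sm w by (auto simp: smooth_on_EN_def differentiable_def)
  moreover have "\<gamma> 0 = w" by (simp add: \<gamma>_vec vec_eq_iff)
  ultimately have curve: "((\<lambda>t. f (\<gamma> t)) has_derivative (\<lambda>h. f' (h *\<^sub>R d))) (at 0)"
    using has_derivative_compose[of \<gamma> _ 0 UNIV f f'] by simp
  have "f (\<gamma> t) = f w" for t
  proof -
    define \<phi> where "\<phi> u = (if u = v then exp t else 1)" for u
    have "\<phi> \<in> gauge_group bd" using v by (auto simp: gauge_group_def \<phi>_def)
    moreover have "gauge_act src tgt \<phi> w = \<gamma> t"
      by (auto simp: \<gamma>_vec gauge_act_def vec_eq_iff \<phi>_def cf_def exp_minus field_simps)
    ultimately show ?thesis using gi w unfolding gauge_invariant_def by metis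
  qed
  then have "((\<lambda>t. f (\<gamma> t)) has_derivative (\<lambda>h. 0)) (at 0)" by simp
  from has_derivative_unique[OF curve this] have "f' d = 0"
    by (metis scaleR_one)
  then show ?thesis
    using derivative_by_partials[OF f', of d] by (simp add: d_vec cf_def mult_ac)
qed

lemma gauge_conservation_flags:
  assumes gi: "gauge_invariant src tgt bd f" and sm: "smooth_on_EN f"
    and w: "w \<in> EN" and v: "v \<notin> bd"
  shows "(\<Sum>b\<in>UNIV. if fvert src tgt b = v then (if snd b then 1 else -1) * flag_logderiv f w b else 0) = 0"
proof -
  have "(\<Sum>b\<in>UNIV. if fvert src tgt b = v then (if snd b then 1 else -1) * flag_logderiv f w b else 0)
     = (\<Sum>e\<in>UNIV. w$e * pd f e w * ((if tgt e = v then 1 else 0) - (if src e = v then 1 else 0)))"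
    unfolding sum_pairs
    by (rule sum.cong[OF refl]) (simp add: UNIV_bool fvert_def flag_logderiv_def algebra_simps)
  also have "\<dots> = 0" by (rule gauge_conservation_edges[OF gi sm w v])
  finally show ?thesis .
qed

section \<open>The bracket at a trivalent vertex\<close>

lemma network_rotation:
  assumes "perfect_network src tgt bd wh rot lab" "fvert src tgt a \<notin> bd"
  shows "fvert src tgt (rot a) = fvert src tgt a" "rot (rot (rot a)) = a"
  using assms unfolding perfect_network_def by blast+

lemma network_labels:
  assumes "perfect_network src tgt bd wh rot lab" "fvert src tgt a \<notin> bd"
  shows "lab a \<in> {1,2,3}" "lab (rot a) = lab a mod 3 + 1"
    "lab a = 1 \<longleftrightarrow> (if wh (fvert src tgt a) then snd a else \<not> snd a)"
  using assms unfolding perfect_network_def by blast+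

lemma labelled_vertex_flags:
  assumes N: "perfect_network src tgt bd wh rot lab" and a: "fvert src tgt a \<notin> bd"
  obtains p1 p2 p3 where
    "(p1, p2, p3) \<in> {(a, rot a, rot (rot a)), (rot (rot a), a, rot a), (rot a, rot (rot a), a)}"
    "flags_at src tgt (fvert src tgt a) = {p1, p2, p3}"
    "lab p1 = 1" "lab p2 = 2" "lab p3 = 3"
    "snd p2 = (\<not> snd p1)" "snd p3 = (\<not> snd p1)"
proof -
  define v where "v = fvert src tgt a"
  define b1 where "b1 = rot a"
  define b2 where "b2 = rot b1"
  have v1: "fvert src tgt b1 = v" and v2: "fvert src tgt b2 = v"
    using network_rotation[OF N a] network_rotation[OF N, of b1] a by (simp_all add: b1_def b2_def v_def)
  have vbd: "v \<notin> bd" using a by (simp add: v_def)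
  have La: "lab a \<in> {1,2,3}" and Lb1: "lab b1 = lab a mod 3 + 1" and Lb2: "lab b2 = lab b1 mod 3 + 1"
    using network_labels[OF N a] network_labels[OF N, of b1] v1 vbd by (auto simp: b1_def b2_def)
  have "{a, b1, b2} \<subseteq> flags_at src tgt v" using v1 v2 by (auto simp: flags_at_def v_def)
  moreover have "a \<noteq> b1" "a \<noteq> b2" "b1 \<noteq> b2" using La Lb1 Lb2 by auto
  then have "card {a, b1, b2} = 3" by simp
  moreover have "card (flags_at src tgt v) = 3"
    using N vbd \<open>{a, b1, b2} \<subseteq> flags_at src tgt v\<close> unfolding perfect_network_def by blast
  ultimately have flags: "flags_at src tgt v = {a, b1, b2}"
    by (metis card_subset_eq finite)
  have dirs: "lab a = 1 \<longleftrightarrow> (if wh v then snd a else \<not> snd a)"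
    "lab b1 = 1 \<longleftrightarrow> (if wh v then snd b1 else \<not> snd b1)"
    "lab b2 = 1 \<longleftrightarrow> (if wh v then snd b2 else \<not> snd b2)"
    using network_labels(3)[OF N a] network_labels(3)[OF N, of b1] network_labels(3)[OF N, of b2]
      v1 v2 vbd by (simp_all add: v_def)
  consider "lab a = 1" | "lab a = 2" | "lab a = 3" using La by blast
  then show thesis
  proof cases
    case 1
    with Lb1 Lb2 dirs have "snd b1 = (\<not> snd a)" "snd b2 = (\<not> snd a)" by (cases "wh v"; simp)+
    with that[of a b1 b2] flags 1 Lb1 Lb2 show thesis by (simp add: b1_def b2_def v_def)
  next
    case 2
    with Lb1 Lb2 dirs have "snd a = (\<not> snd b2)" "snd b1 = (\<not> snd b2)" by (cases "wh v"; simp)+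
    with that[of b2 a b1] flags 2 Lb1 Lb2 show thesis by (simp add: b1_def b2_def v_def insert_commute)
  next
    case 3
    with Lb1 Lb2 dirs have "snd b2 = (\<not> snd b1)" "snd a = (\<not> snd b1)" by (cases "wh v"; simp)+
    with that[of b1 b2 a] flags 3 Lb1 Lb2 show thesis by (simp add: b1_def b2_def v_def insert_commute)
  qed
qed

text \<open>The pairing of F and G at the vertex of the flag a, in terms of the flags labelled
  2 and 3 there (all three flags at a vertex give the same value).\<close>
definition vertex_pairing ::
  "('e flag \<Rightarrow> 'e flag) \<Rightarrow> ('e flag \<Rightarrow> nat)
   \<Rightarrow> ('e flag \<Rightarrow> real) \<Rightarrow> ('e flag \<Rightarrow> real) \<Rightarrow> 'e flag \<Rightarrow> real" where
  "vertex_pairing rot lab F G a = (let b = rot a; c = rot b in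
     if lab a = 1 then F b * G c - F c * G b
     else if lab a = 2 then F a * G b - F b * G a else F c * G a - F a * G c)"

lemma triangle_identity:
  fixes c :: "nat \<Rightarrow> nat \<Rightarrow> real"
  assumes "antisym3 c" "F1 = F2 + F3" "G1 = G2 + G3"
  shows "F1 * (c 1 2 * G2 + c 1 3 * G3) + F2 * (c 2 1 * G1 + c 2 3 * G3) + F3 * (c 3 1 * G1 + c 3 2 * G2)
       = (c 2 3 + c 1 3 - c 1 2) * (F2 * G3 - F3 * G2)"
proof -
  have c: "c 2 1 = - c 1 2" "c 3 1 = - c 1 3" "c 3 2 = - c 2 3"
    using assms(1) unfolding antisym3_def by blast+
  show ?thesis unfolding c assms(2,3) by (simp add: algebra_simps)
qed

lemma sum_at_vertex:
  fixes src tgt :: "'e::finite \<Rightarrow> 'v"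
  assumes "flags_at src tgt v = {p1, p2, p3}" "p1 \<noteq> p2" "p1 \<noteq> p3" "p2 \<noteq> p3"
  shows "(\<Sum>b\<in>UNIV. if fvert src tgt b = v then h b else 0) = h p1 + h p2 + h p3"
proof -
  have "(\<Sum>b\<in>UNIV. if fvert src tgt b = v then h b else 0) = (\<Sum>b\<in>flags_at src tgt v. h b)"
    unfolding flags_at_def by (simp add: sum.inter_filter[symmetric])
  with assms show ?thesis by (simp add: add.assoc)
qed

text \<open>Gauge conservation at a vertex in terms of labels: since p1 points against p2 and
  p3, the signed sum vanishing means H p1 = H p2 + H p3.\<close>
lemma conservation_at_vertex:
  fixes src tgt :: "'e::finite \<Rightarrow> 'v" and H :: "'e flag \<Rightarrow> real"
  assumes flags: "flags_at src tgt v = {p1, p2, p3}" and dist: "p1 \<noteq> p2" "p1 \<noteq> p3" "p2 \<noteq> p3"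
    and dir: "snd p2 = (\<not> snd p1)" "snd p3 = (\<not> snd p1)"
    and "(\<Sum>b\<in>UNIV. if fvert src tgt b = v then (if snd b then 1 else -1) * H b else 0) = 0"
  shows "H p1 = H p2 + H p3"
  using assms(7) sum_at_vertex[OF flags dist, of "\<lambda>b. (if snd b then 1 else -1) * H b"] dir
  by (cases "snd p1") simp_all

lemma vertex_contribution:
  fixes src tgt :: "'e::finite \<Rightarrow> 'v"
  assumes N: "perfect_network src tgt bd wh rot lab"
    and "antisym3 \<alpha>" "antisym3 \<beta>"
    and gF: "\<And>v. v \<notin> bd \<Longrightarrow> (\<Sum>b\<in>UNIV. if fvert src tgt b = v then (if snd b then 1 else -1) * F b else 0) = 0"
    and gG: "\<And>v. v \<notin> bd \<Longrightarrow> (\<Sum>b\<in>UNIV. if fvert src tgt b = v then (if snd b then 1 else -1) * G b else 0) = 0"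
    and a: "fvert src tgt a \<notin> bd"
  defines "T x \<equiv> \<Sum>b\<in>UNIV. univ_pi src tgt bd wh lab \<alpha> \<beta> x b * F x * G b"
  shows "T a + T (rot a) + T (rot (rot a))
     = (if wh (fvert src tgt a) then \<alpha> 2 3 + \<alpha> 1 3 - \<alpha> 1 2 else \<beta> 2 3 + \<beta> 1 3 - \<beta> 1 2)
        * vertex_pairing rot lab F G a"
proof -
  define v where "v = fvert src tgt a"
  define c where "c = (if wh v then \<alpha> else \<beta>)"
  obtain p1 p2 p3 where orbit:
      "(p1, p2, p3) \<in> {(a, rot a, rot (rot a)), (rot (rot a), a, rot a), (rot a, rot (rot a), a)}"
    and flags: "flags_at src tgt v = {p1, p2, p3}"
    and lab: "lab p1 = 1" "lab p2 = 2" "lab p3 = 3"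
    and dir: "snd p2 = (\<not> snd p1)" "snd p3 = (\<not> snd p1)"
    unfolding v_def by (rule labelled_vertex_flags[OF N a])
  have dist: "p1 \<noteq> p2" "p1 \<noteq> p3" "p2 \<noteq> p3" using lab by auto
  have at_v: "fvert src tgt x = v" if "x \<in> {p1, p2, p3}" for x
    using that flags by (auto simp: flags_at_def)
  have vbd: "v \<notin> bd" using a by (simp add: v_def)
  have pi_at_v: "univ_pi src tgt bd wh lab \<alpha> \<beta> x b
      = (if fvert src tgt b = v then (if x = b then 0 else c (lab x) (lab b)) else 0)"
    if "x \<in> {p1, p2, p3}" for x b
    using at_v[OF that] vbd by (auto simp: univ_pi_def c_def)
  have row: "T x = F x * ((if x = p1 then 0 else c (lab x) 1) * G p1
      + (if x = p2 then 0 else c (lab x) 2) * G p2 + (if x = p3 then 0 else c (lab x) 3) * G p3)"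
    if "x \<in> {p1, p2, p3}" for x
  proof -
    have "T x = (\<Sum>b\<in>UNIV. if fvert src tgt b = v
        then (if x = b then 0 else c (lab x) (lab b)) * F x * G b else 0)"
      unfolding T_def by (rule sum.cong) (simp_all add: pi_at_v[OF that])
    then show ?thesis
      unfolding sum_at_vertex[OF flags dist] by (simp add: lab algebra_simps)
  qed
  have "T a + T (rot a) + T (rot (rot a)) = T p1 + T p2 + T p3"
    using orbit by auto
  also have "\<dots> = F p1 * (c 1 2 * G p2 + c 1 3 * G p3) + F p2 * (c 2 1 * G p1 + c 2 3 * G p3)
      + F p3 * (c 3 1 * G p1 + c 3 2 * G p2)"
    using row[of p1] row[of p2] row[of p3] dist lab
    by (simp add: eq_commute[of p2 p1] eq_commute[of p3 p1] eq_commute[of p3 p2])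
  also have "\<dots> = (c 2 3 + c 1 3 - c 1 2) * (F p2 * G p3 - F p3 * G p2)"
  proof (rule triangle_identity)
    show "antisym3 c" using assms(2,3) by (simp add: c_def)
    show "F p1 = F p2 + F p3" "G p1 = G p2 + G p3"
      using conservation_at_vertex[OF flags dist dir] gF[OF vbd] gG[OF vbd] by blast+
  qed
  also have "F p2 * G p3 - F p3 * G p2 = vertex_pairing rot lab F G a"
    using orbit lab by (auto simp: vertex_pairing_def Let_def)
  finally show ?thesis by (simp add: c_def v_def)
qed

section \<open>Summing over vertices\<close>

text \<open>A map of order three on I permutes I, so summing T over I is a third of summing
  T over the orbits.\<close>
lemma sum_rotation_average:
  fixes T :: "'a \<Rightarrow> real"
  assumes "\<And>x. x \<in> I \<Longrightarrow> r x \<in> I" "\<And>x. x \<in> I \<Longrightarrow> r (r (r x)) = x"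
  shows "3 * (\<Sum>a\<in>I. T a) = (\<Sum>a\<in>I. T a + T (r a) + T (r (r a)))"
proof -
  have bij: "bij_betw r I I"
  proof (rule bij_betw_imageI)
    show "inj_on r I" by (metis assms(2) inj_onI)
    show "r ` I = I" using assms by (auto intro!: image_eqI[where x = "r (r x)" for x])
  qed
  have "(\<Sum>a\<in>I. T (r a)) = (\<Sum>a\<in>I. T a)" "(\<Sum>a\<in>I. T (r (r a))) = (\<Sum>a\<in>I. T a)"
    using sum.reindex_bij_betw[OF bij] sum.reindex_bij_betw[OF bij_betw_trans[OF bij bij]]
    by simp_all
  then show ?thesis by (simp add: sum.distrib)
qed

text \<open>Each vertex is
  counted once for each of its three flags, hence the factor 1/3.\<close>
definition colour_pairing ::
  "('e::finite \<Rightarrow> 'v) \<Rightarrow> ('e \<Rightarrow> 'v) \<Rightarrow> 'v set \<Rightarrow> ('v \<Rightarrow> bool) \<Rightarrow> ('e flag \<Rightarrow> 'e flag)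
   \<Rightarrow> ('e flag \<Rightarrow> nat) \<Rightarrow> (real ^ 'e \<Rightarrow> real) \<Rightarrow> (real ^ 'e \<Rightarrow> real) \<Rightarrow> real ^ 'e \<Rightarrow> real" where
  "colour_pairing src tgt bd C rot lab f g w = (1/3) * (\<Sum>a\<in>UNIV.
     if fvert src tgt a \<notin> bd \<and> C (fvert src tgt a)
     then vertex_pairing rot lab (flag_logderiv f w) (flag_logderiv g w) a else 0)"

lemma net_bracket_factorisation:
  fixes src tgt :: "'e::finite \<Rightarrow> 'v"
  assumes N: "perfect_network src tgt bd wh rot lab"
    and a\<alpha>: "antisym3 \<alpha>" and a\<beta>: "antisym3 \<beta>"
    and sf: "smooth_on_EN f" and sg: "smooth_on_EN g"
    and gf: "gauge_invariant src tgt bd f" and gg: "gauge_invariant src tgt bd g"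
    and w: "w \<in> EN"
  shows "net_bracket src tgt bd wh lab \<alpha> \<beta> f g w =
     (\<alpha> 2 3 + \<alpha> 1 3 - \<alpha> 1 2) * colour_pairing src tgt bd wh rot lab f g w
   + (\<beta> 2 3 + \<beta> 1 3 - \<beta> 1 2) * colour_pairing src tgt bd (\<lambda>v. \<not> wh v) rot lab f g w"
proof -
  define F where "F = flag_logderiv f w"
  define G where "G = flag_logderiv g w"
  define T where "T a = (\<Sum>b\<in>UNIV. univ_pi src tgt bd wh lab \<alpha> \<beta> a b * F a * G b)" for a
  define I where "I = {a. fvert src tgt a \<notin> bd}"
  define k where "k a = (if wh (fvert src tgt a) then \<alpha> 2 3 + \<alpha> 1 3 - \<alpha> 1 2
    else \<beta> 2 3 + \<beta> 1 3 - \<beta> 1 2)" for a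
  define vp where "vp = vertex_pairing rot lab F G"
  define SW where "SW = (\<Sum>a\<in>UNIV. if fvert src tgt a \<notin> bd \<and> wh (fvert src tgt a) then vp a else 0)"
  define SB where "SB = (\<Sum>a\<in>UNIV. if fvert src tgt a \<notin> bd \<and> \<not> wh (fvert src tgt a) then vp a else 0)"
  have "net_bracket src tgt bd wh lab \<alpha> \<beta> f g w = (\<Sum>a\<in>I. T a)"
    unfolding net_bracket_flags T_def F_def G_def I_def
    by (rule sum.mono_neutral_right) (auto simp: univ_pi_def sum_distrib_left)
  also have "\<dots> = (1/3) * (\<Sum>a\<in>I. T a + T (rot a) + T (rot (rot a)))"
    using sum_rotation_average[of I rot T] by (simp add: I_def network_rotation[OF N])
  also have "(\<Sum>a\<in>I. T a + T (rot a) + T (rot (rot a))) = (\<Sum>a\<in>I. k a * vp a)"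
    using vertex_contribution[OF N a\<alpha> a\<beta> gauge_conservation_flags[OF gf sf w]
        gauge_conservation_flags[OF gg sg w]]
    by (simp add: I_def T_def k_def F_def G_def vp_def)
  also have "(\<Sum>a\<in>I. k a * vp a) = (\<Sum>a\<in>UNIV. if a \<in> I then k a * vp a else 0)"
    by (simp add: sum.inter_filter[symmetric])
  also have "\<dots> = (\<Sum>a\<in>UNIV.
      (\<alpha> 2 3 + \<alpha> 1 3 - \<alpha> 1 2) * (if a \<in> I \<and> wh (fvert src tgt a) then vp a else 0)
    + (\<beta> 2 3 + \<beta> 1 3 - \<beta> 1 2) * (if a \<in> I \<and> \<not> wh (fvert src tgt a) then vp a else 0))"
    by (rule sum.cong) (auto simp: k_def)
  also have "\<dots> = (\<alpha> 2 3 + \<alpha> 1 3 - \<alpha> 1 2) * SW + (\<beta> 2 3 + \<beta> 1 3 - \<beta> 1 2) * SB"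
    unfolding SW_def SB_def by (simp add: sum.distrib sum_distrib_left I_def)
  finally show ?thesis
    unfolding colour_pairing_def F_def[symmetric] G_def[symmetric] vp_def[symmetric]
      SW_def[symmetric] SB_def[symmetric]
    by (simp add: algebra_simps)
qed

theorem theorem3p2:
  fixes src tgt :: "'e::finite \<Rightarrow> 'v"
    and bd :: "'v set" and wh :: "'v \<Rightarrow> bool"
    and rot :: "'e flag \<Rightarrow> 'e flag" and lab :: "'e flag \<Rightarrow> nat"
  assumes N: "perfect_network src tgt bd wh rot lab"
  shows
    \<comment> \<open>(0) net_bracket is the pushforward of the universal bracket under x \<mapsto> w\<close>
    "(\<forall>\<alpha> \<beta> f g. smooth_on_EN f \<and> smooth_on_EN g \<longrightarrow>
        (\<forall>x\<in>XN. univ_bracket src tgt bd wh lab \<alpha> \<beta> (f \<circ> edge_weights) (g \<circ> edge_weights) x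
                 = net_bracket src tgt bd wh lab \<alpha> \<beta> f g (edge_weights x)))
   \<and>
    \<comment> \<open>(1) gauge-invariant functions form a Poisson subalgebra\<close>
    (\<forall>\<alpha> \<beta> f g. smooth_on_EN f \<and> smooth_on_EN g \<and>
        gauge_invariant src tgt bd f \<and> gauge_invariant src tgt bd g \<longrightarrow>
        gauge_invariant src tgt bd (net_bracket src tgt bd wh lab \<alpha> \<beta> f g))
   \<and>
    \<comment> \<open>(2) on gauge-invariant functions the bracket depends only on alpha, beta, linearly\<close>
    (\<exists>P Q :: (real ^ 'e \<Rightarrow> real) \<Rightarrow> (real ^ 'e \<Rightarrow> real) \<Rightarrow> real ^ 'e \<Rightarrow> real.
       \<forall>\<alpha> \<beta> f g. antisym3 \<alpha> \<and> antisym3 \<beta> \<and> smooth_on_EN f \<and> smooth_on_EN g \<and>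
          gauge_invariant src tgt bd f \<and> gauge_invariant src tgt bd g \<longrightarrow>
          (\<forall>w\<in>EN. net_bracket src tgt bd wh lab \<alpha> \<beta> f g w =
             (\<alpha> 2 3 + \<alpha> 1 3 - \<alpha> 1 2) * P f g w + (\<beta> 2 3 + \<beta> 1 3 - \<beta> 1 2) * Q f g w))"
  \<comment> \<open>in (2), P and Q are the white and the black vertex pairings\<close>
  by (intro conjI allI impI ballI exI[of _ "colour_pairing src tgt bd wh rot lab"]
      exI[of _ "colour_pairing src tgt bd (\<lambda>v. \<not> wh v) rot lab"])
    (simp_all add: univ_bracket_pushforward gauge_invariant_net_bracket net_bracket_factorisation[OF N])

end
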